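(* Let $p\in\{1,2\}$, let $s\ge 1$ be an integer ($s\ge 2$ if $p=2$), let $\varepsilon\ge 0$, and let the coefficients $\omega_0,\omega_1,b_j,a_j,\mu_j,\nu_j,\kappa_j,\gamma_j,c_j$ and the polynomials $R_k$ be as defined in the context. Let $A\in\mathbb{R}^{n\times n}$, $\Delta t>0$, let $\bm{r}_1,\dots,\bm{r}_s\in\mathbb{R}^n$, and define $$\bm{d}_0=\bm{0},\qquad \bm{d}_1=\bm{r}_1,\qquad \bm{d}_j=\nu_j\bm{d}_{j-1}+\kappa_j\bm{d}_{j-2}+\mu_j\,\Delta t A\bm{d}_{j-1}+\bm{r}_j,\quad j=2,\dots,s.$$ Then: (i) With $I$ the $n\times n$ identity matrix, $$\bm{d}_k=\sum_{j=1}^k\frac{b_k}{b_j}U_{k-j}(\omega_0 I+\omega_1\Delta t A)\,\bm{r}_j,\qquad k=1,\dots,s.$$ (ii) For $k=1,\dots,s$, the following identities hold (for $z\neq 0$, and hence as polynomial identities, so that the left-hand sides are polynomials in $z$): $$\overline{R}_k(z):=\frac{R_k(z)-1}{z}=\sum_{j=1}^k\frac{b_k}{b_j}U_{k-j}(\omega_0+\omega_1 z)(\mu_j+\gamma_j),$$ $$\widetilde{R}_k(z):=\frac{R_k(z)-1-c_kz}{z^2}=\sum_{j=2}^k\frac{b_k}{b_j}U_{k-j}(\omega_0+\omega_1 z)\,\mu_j c_{j-1}.$$ (iii) If $\bm{r}\in\mathbb{R}^n$ and $\bm{r}_j=(\mu_j+\gamma_j)\bm{r}$ for $j=1,\dots,s$,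 then $\bm{d}_k=\overline{R}_k(\Delta t A)\bm{r}$ for $k=1,\dots,s$.
   Context: Chebyshev polynomials: $T_0(x)=1$, $T_1(x)=x$, $T_j(x)=2xT_{j-1}(x)-T_{j-2}(x)$; $U_0(x)=1$, $U_1(x)=2x$, $U_j(x)=2xU_{j-1}(x)-U_{j-2}(x)$ for $j\ge 2$. For a square matrix $M$, $U_j(M)$ denotes the matrix polynomial. Runge–Kutta–Chebyshev (RKC) coefficients of order $p\in\{1,2\}$ with $s$ stages and damping $\varepsilon\ge0$: $\omega_0=1+\varepsilon/s^2$. If $p=1$: $\omega_1=T_s(\omega_0)/T_s'(\omega_0)$ and $b_j=1/T_j(\omega_0)$ for $j=0,\dots,s$. If $p=2$: $\omega_1=T_s'(\omega_0)/T_s''(\omega_0)$, $b_j=T_j''(\omega_0)/T_j'(\omega_0)^2$ for $j=2,\dots,s$, and $b_0=b_1=b_2$. In both cases $a_j=1-b_jT_j(\omega_0)$ for $j=0,\dots,s$; $\mu_1=b_1\omega_1$, $\gamma_1=0$, and for $j=2,\dots,s$: $\mu_j=2\omega_1b_j/b_{j-1}$, $\nu_j=2\omega_0 b_j/b_{j-1}$, $\kappa_j=-b_j/b_{j-2}$, $\gamma_j=-\mu_j a_{j-1}$. Also $c_0=0$, $c_1=\mu_1$, $c_j=\nu_jc_{j-1}+\kappa_jc_{j-2}+\mu_j+\gamma_j$ for $j=2,\dots,s$. The internal stability polynomials are $R_k(z)=a_k+b_kT_k(\omega_0+\omega_1 z)$, $k=0,\dots,s$. *)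

theory Defs
  imports "HOL-Analysis.Analysis" "HOL-Computational_Algebra.Polynomial"
begin

fun cheb_T :: "nat \<Rightarrow> real poly" where
  "cheb_T 0 = 1"
| "cheb_T (Suc 0) = [:0, 1:]"
| "cheb_T (Suc (Suc j)) = [:0, 2:] * cheb_T (Suc j) - cheb_T j"

fun cheb_U :: "nat \<Rightarrow> real poly" where
  "cheb_U 0 = 1"
| "cheb_U (Suc 0) = [:0, 2:]"
| "cheb_U (Suc (Suc j)) = [:0, 2:] * cheb_U (Suc j) - cheb_U j"

fun cheb_U_mat :: "nat \<Rightarrow> real^'n^'n \<Rightarrow> real^'n^'n" where
  "cheb_U_mat 0 M = mat 1"
| "cheb_U_mat (Suc 0) M = (2::real) *\<^sub>R M"
| "cheb_U_mat (Suc (Suc j)) M = (2::real) *\<^sub>R (M ** cheb_U_mat (Suc j) M) - cheb_U_mat j M"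

fun mat_pow :: "real^'n^'n \<Rightarrow> nat \<Rightarrow> real^'n^'n" where
  "mat_pow M 0 = mat 1"
| "mat_pow M (Suc k) = M ** mat_pow M k"

definition poly_mat :: "real poly \<Rightarrow> real^'n^'n \<Rightarrow> real^'n^'n" where
  "poly_mat q M = (\<Sum>i\<le>degree q. coeff q i *\<^sub>R mat_pow M i)"

definition rkc_omega0 :: "nat \<Rightarrow> real \<Rightarrow> real" where
  "rkc_omega0 s eps = 1 + eps / (real s)^2"

definition rkc_omega1 :: "nat \<Rightarrow> nat \<Rightarrow> real \<Rightarrow> real" where
  "rkc_omega1 p s eps =
     (let w0 = rkc_omega0 s eps in
      if p = 1 then poly (cheb_T s) w0 / poly (pderiv (cheb_T s)) w0
      else poly (pderiv (cheb_T s)) w0 / poly (pderiv (pderiv (cheb_T s))) w0)"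

definition rkc_b :: "nat \<Rightarrow> nat \<Rightarrow> real \<Rightarrow> nat \<Rightarrow> real" where
  "rkc_b p s eps j =
     (let w0 = rkc_omega0 s eps;
          b2 = (\<lambda>i. poly (pderiv (pderiv (cheb_T i))) w0 / (poly (pderiv (cheb_T i)) w0)^2) in
      if p = 1 then 1 / poly (cheb_T j) w0
      else if j < 2 then b2 2 else b2 j)"

definition rkc_a :: "nat \<Rightarrow> nat \<Rightarrow> real \<Rightarrow> nat \<Rightarrow> real" where
  "rkc_a p s eps j = 1 - rkc_b p s eps j * poly (cheb_T j) (rkc_omega0 s eps)"

definition rkc_mu :: "nat \<Rightarrow> nat \<Rightarrow> real \<Rightarrow> nat \<Rightarrow> real" where
  "rkc_mu p s eps j =
     (if j = 1 then rkc_b p s eps 1 * rkc_omega1 p s eps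
      else 2 * rkc_omega1 p s eps * rkc_b p s eps j / rkc_b p s eps (j - 1))"

definition rkc_nu :: "nat \<Rightarrow> nat \<Rightarrow> real \<Rightarrow> nat \<Rightarrow> real" where
  "rkc_nu p s eps j = 2 * rkc_omega0 s eps * rkc_b p s eps j / rkc_b p s eps (j - 1)"

definition rkc_kappa :: "nat \<Rightarrow> nat \<Rightarrow> real \<Rightarrow> nat \<Rightarrow> real" where
  "rkc_kappa p s eps j = - rkc_b p s eps j / rkc_b p s eps (j - 2)"

definition rkc_gamma :: "nat \<Rightarrow> nat \<Rightarrow> real \<Rightarrow> nat \<Rightarrow> real" where
  "rkc_gamma p s eps j =
     (if j = 1 then 0 else - rkc_mu p s eps j * rkc_a p s eps (j - 1))"

fun rkc_c :: "nat \<Rightarrow> nat \<Rightarrow> real \<Rightarrow> nat \<Rightarrow> real" where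
  "rkc_c p s eps 0 = 0"
| "rkc_c p s eps (Suc 0) = rkc_mu p s eps 1"
| "rkc_c p s eps (Suc (Suc j)) =
     rkc_nu p s eps (j + 2) * rkc_c p s eps (Suc j) + rkc_kappa p s eps (j + 2) * rkc_c p s eps j
     + rkc_mu p s eps (j + 2) + rkc_gamma p s eps (j + 2)"

definition rkc_R :: "nat \<Rightarrow> nat \<Rightarrow> real \<Rightarrow> nat \<Rightarrow> real poly" where
  "rkc_R p s eps k =
     [:rkc_a p s eps k:] + smult (rkc_b p s eps k)
        (pcompose (cheb_T k) [:rkc_omega0 s eps, rkc_omega1 p s eps:])"

definition rkc_Rbar :: "nat \<Rightarrow> nat \<Rightarrow> real \<Rightarrow> nat \<Rightarrow> real poly" where
  "rkc_Rbar p s eps k = (rkc_R p s eps k - 1) div [:0, 1:]"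

definition rkc_Rtilde :: "nat \<Rightarrow> nat \<Rightarrow> real \<Rightarrow> nat \<Rightarrow> real poly" where
  "rkc_Rtilde p s eps k = (rkc_R p s eps k - 1 - [:0, rkc_c p s eps k:]) div [:0, 0, 1:]"

fun rkc_d :: "nat \<Rightarrow> nat \<Rightarrow> real \<Rightarrow> real \<Rightarrow> real^'n^'n \<Rightarrow> (nat \<Rightarrow> real^'n) \<Rightarrow> nat \<Rightarrow> real^'n" where
  "rkc_d p s eps dt A r 0 = 0"
| "rkc_d p s eps dt A r (Suc 0) = r 1"
| "rkc_d p s eps dt A r (Suc (Suc j)) =
     rkc_nu p s eps (j + 2) *\<^sub>R rkc_d p s eps dt A r (Suc j)
     + rkc_kappa p s eps (j + 2) *\<^sub>R rkc_d p s eps dt A r j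
     + (rkc_mu p s eps (j + 2) * dt) *\<^sub>R (A *v rkc_d p s eps dt A r (Suc j))
     + r (j + 2)"

end

theory Submission
  imports Defs
begin

(* Dividing the recursion for d_k by b_k turns it into the inhomogeneous Chebyshev recursion
   f_(k+2) = 2 M f_(k+1) - f_k + g_(k+2) with M = omega0 I + omega1 dt A, because
   nu_k + mu_k dt A = 2 (b_k / b_(k-1)) M; its solution is the convolution
   f_k = sum_j U_(k-j)(M) g_j.  The same recursion, with M replaced by multiplication by
   omega0 + omega1 z, is satisfied by R_k(z) - 1 with inhomogeneity (mu_k + gamma_k) z, and by
   R_k(z) - 1 - c_k z with inhomogeneity mu_k c_(k-1) z^2.  This gives (ii) pointwise and hence as
   polynomial identities, and (iii) is (i) with the Chebyshev expansion of Rbar_k evaluated at dt A.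
   The coefficients b_j never vanish, since T_j, T_j' and T_j'' are positive and increasing on
   [1, oo). *)

locale chebyshev_iterates =
  fixes L :: "'v::real_vector \<Rightarrow> 'v" and U :: "nat \<Rightarrow> 'v \<Rightarrow> 'v"
  assumes linear_L: "linear L"
    and U_0: "U 0 x = x"
    and U_1: "U (Suc 0) x = 2 *\<^sub>R L x"
    and U_Suc_Suc: "U (Suc (Suc n)) x = 2 *\<^sub>R L (U (Suc n) x) - U n x"
begin

lemma linear_U: "linear (U n)"
proof (induction n rule: induct_nat_012)
  case 0
  show ?case by (simp add: U_0 linear_id[unfolded id_def])
next
  case 1
  show ?case
    using linear_L by (simp add: U_1 linear_iff algebra_simps)
next
  case (ge2 n)
  then show ?case
    by (simp add: U_Suc_Suc linear_iff linear_add[OF linear_L] linear_scale[OF linear_L] algebra_simps)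
qed

lemma recurrence_solution:
  assumes "f 0 = 0" and "f 1 = g 1"
    and "\<And>k. f (k + 2) = 2 *\<^sub>R L (f (k + 1)) - f k + g (k + 2)"
  shows "f k = (\<Sum>j=1..k. U (k - j) (g j))"
proof (induction k rule: induct_nat_012)
  case 0
  show ?case using assms(1) by simp
next
  case 1
  show ?case using assms(2) by (simp add: U_0)
next
  case (ge2 n)
  have "2 *\<^sub>R L (f (Suc n)) = (\<Sum>j=1..n. 2 *\<^sub>R L (U (Suc n - j) (g j))) + 2 *\<^sub>R L (g (Suc n))"
    by (simp add: ge2.IH(2) linear_add[OF linear_L] linear_sum[OF linear_L] scaleR_sum_right
        scaleR_add_right U_0)
  also have "\<dots> = (\<Sum>j=1..n. U (Suc (Suc n) - j) (g j) + U (n - j) (g j)) + U (Suc 0) (g (Suc n))"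
    by (intro arg_cong2[where f="(+)"] sum.cong) (simp_all add: U_Suc_Suc Suc_diff_le U_1)
  finally show ?case
    using assms(3)[of n] ge2.IH(1) by (simp add: sum.distrib U_0 algebra_simps)
qed

lemma weighted_recurrence_solution:
  assumes b_nonzero: "\<And>j. b j \<noteq> 0"
    and "e 0 = 0" and "e 1 = r 1"
    and e_rec: "\<And>k. e (k + 2) =
      (2 * b (k + 2) / b (k + 1)) *\<^sub>R L (e (k + 1)) - (b (k + 2) / b k) *\<^sub>R e k + r (k + 2)"
  shows "e k = (\<Sum>j=1..k. (b k / b j) *\<^sub>R U (k - j) (r j))"
proof -
  have scaled: "e k /\<^sub>R b k = (\<Sum>j=1..k. U (k - j) (r j /\<^sub>R b j))"
  proof (rule recurrence_solution)
    fix k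
    show "e (k + 2) /\<^sub>R b (k + 2) =
      2 *\<^sub>R L (e (k + 1) /\<^sub>R b (k + 1)) - e k /\<^sub>R b k + r (k + 2) /\<^sub>R b (k + 2)"
      unfolding e_rec using b_nonzero[of "k + 2"]
      by (simp add: linear_scale[OF linear_L] scaleR_add_right scaleR_diff_right field_simps)
  qed (use assms(2,3) in simp_all)
  have "e k = b k *\<^sub>R (e k /\<^sub>R b k)"
    using b_nonzero[of k] by simp
  also have "\<dots> = (\<Sum>j=1..k. (b k / b j) *\<^sub>R U (k - j) (r j))"
    by (simp add: scaled scaleR_sum_right linear_scale[OF linear_U] divide_inverse mult.commute)
  finally show ?thesis .
qed

end

lemma chebyshev_iterates_cheb_U_mat:
  fixes M :: "real^'n^'n"
  shows "chebyshev_iterates ((*v) M) (\<lambda>n x. cheb_U_mat n M *v x)"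
  by (intro chebyshev_iterates.intro)
    (simp_all add: matrix_vector_mul_linear scaleR_matrix_vector_assoc matrix_vector_mul_assoc
      matrix_vector_mult_diff_rdistrib)

lemma chebyshev_iterates_cheb_U:
  fixes x :: real
  shows "chebyshev_iterates ((*) x) (\<lambda>n y. poly (cheb_U n) x * y)"
  by (intro chebyshev_iterates.intro) (simp_all add: linear_iff algebra_simps)

lemma incseq_chebyshev_supersolution:
  fixes a :: "nat \<Rightarrow> real"
  assumes "x \<ge> 1" and "0 \<le> a 0" and "a 0 \<le> a 1"
    and super: "\<And>j. 2 * x * a (Suc j) - a j \<le> a (Suc (Suc j))"
  shows "incseq a"
proof -
  have "0 \<le> a j \<and> a j \<le> a (Suc j)" for j
  proof (induction j)
    case 0
    show ?case using assms(2,3) by simp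
  next
    case (Suc j)
    then have "2 * a (Suc j) \<le> 2 * x * a (Suc j)"
      using \<open>x \<ge> 1\<close> by (simp add: mult_right_mono)
    then show ?case using Suc super[of j] by linarith
  qed
  then show ?thesis by (simp add: incseq_SucI)
qed

lemma poly_pderiv_cheb_T_Suc_Suc:
  "poly (pderiv (cheb_T (Suc (Suc j)))) x =
    2 * x * poly (pderiv (cheb_T (Suc j))) x - poly (pderiv (cheb_T j)) x + 2 * poly (cheb_T (Suc j)) x"
  by (simp add: pderiv_mult pderiv_diff pderiv_pCons pderiv_smult algebra_simps)

lemma poly_pderiv2_cheb_T_Suc_Suc:
  "poly (pderiv (pderiv (cheb_T (Suc (Suc j))))) x =
    2 * x * poly (pderiv (pderiv (cheb_T (Suc j)))) x - poly (pderiv (pderiv (cheb_T j))) x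
    + 4 * poly (pderiv (cheb_T (Suc j))) x"
  by (simp add: pderiv_mult pderiv_diff pderiv_pCons pderiv_add pderiv_smult algebra_simps)

lemma cheb_T_incseq:
  assumes "x \<ge> 1"
  shows "incseq (\<lambda>j. poly (cheb_T j) x)"
  by (rule incseq_chebyshev_supersolution[OF assms]) (use assms in simp_all)

lemma cheb_T_ge_1:
  assumes "x \<ge> 1"
  shows "poly (cheb_T j) x \<ge> 1"
  using incseqD[OF cheb_T_incseq[OF assms], of 0 j] by simp

lemma pderiv_cheb_T_incseq:
  assumes "x \<ge> 1"
  shows "incseq (\<lambda>j. poly (pderiv (cheb_T j)) x)"
proof (rule incseq_chebyshev_supersolution[OF assms])
  fix j
  show "2 * x * poly (pderiv (cheb_T (Suc j))) x - poly (pderiv (cheb_T j)) x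
      \<le> poly (pderiv (cheb_T (Suc (Suc j)))) x"
    unfolding poly_pderiv_cheb_T_Suc_Suc using cheb_T_ge_1[OF assms, of "Suc j"] by simp
qed (simp_all add: pderiv_pCons)

lemma pderiv_cheb_T_ge_1:
  assumes "x \<ge> 1" and "j \<ge> 1"
  shows "poly (pderiv (cheb_T j)) x \<ge> 1"
  using incseqD[OF pderiv_cheb_T_incseq[OF assms(1)] assms(2)] by (simp add: pderiv_pCons)

lemma pderiv2_cheb_T_incseq:
  assumes "x \<ge> 1"
  shows "incseq (\<lambda>j. poly (pderiv (pderiv (cheb_T j))) x)"
proof (rule incseq_chebyshev_supersolution[OF assms])
  fix j
  show "2 * x * poly (pderiv (pderiv (cheb_T (Suc j)))) x - poly (pderiv (pderiv (cheb_T j))) x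
      \<le> poly (pderiv (pderiv (cheb_T (Suc (Suc j))))) x"
    unfolding poly_pderiv2_cheb_T_Suc_Suc using pderiv_cheb_T_ge_1[OF assms, of "Suc j"] by simp
qed (simp_all add: pderiv_pCons)

lemma pderiv2_cheb_T_ge_4:
  assumes "x \<ge> 1" and "j \<ge> 2"
  shows "poly (pderiv (pderiv (cheb_T j))) x \<ge> 4"
  using incseqD[OF pderiv2_cheb_T_incseq[OF assms(1)] assms(2)]
  by (simp add: numeral_2_eq_2 pderiv_mult pderiv_diff pderiv_pCons)

lemma poly_div_eqI:
  fixes P D Q :: "'a::field_char_0 poly"
  assumes "D \<noteq> 0" and "\<And>z. poly P z = poly D z * poly Q z"
  shows "P div D = Q"
proof -
  have "P = D * Q"
    using assms(2) by (simp add: poly_eq_poly_eq_iff[symmetric] fun_eq_iff)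
  then show ?thesis
    using assms(1) by simp
qed

lemma matrix_add_rdistrib:
  fixes A B :: "'a::semiring_1^'n^'m" and C :: "'a^'p^'n"
  shows "(A + B) ** C = A ** C + B ** C"
  by (simp add: matrix_matrix_mult_def vec_eq_iff sum.distrib distrib_right)

lemma matrix_mul_sum_right:
  fixes M :: "'a::semiring_1^'n^'m" and f :: "'i \<Rightarrow> 'a^'p^'n"
  shows "finite S \<Longrightarrow> M ** sum f S = (\<Sum>i\<in>S. M ** f i)"
  by (induction S rule: finite_induct) (simp_all add: matrix_add_ldistrib)

lemma sum_matrix_vector_mult:
  fixes f :: "'i \<Rightarrow> 'a::semiring_1^'n^'m"
  shows "finite S \<Longrightarrow> sum f S *v x = (\<Sum>i\<in>S. f i *v x)"
  by (induction S rule: finite_induct) (simp_all add: matrix_vector_mult_add_rdistrib)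

lemma poly_mat_eq_sum_lessThan:
  assumes "degree q < m"
  shows "poly_mat q M = (\<Sum>i<m. coeff q i *\<^sub>R mat_pow M i)"
  unfolding poly_mat_def
  by (rule sum.mono_neutral_left) (use assms in \<open>auto simp: coeff_eq_0\<close>)

lemma poly_mat_add: "poly_mat (p + q) M = poly_mat p M + poly_mat q M"
proof -
  let ?m = "Suc (max (degree p) (degree q))"
  have "degree p < ?m" "degree q < ?m" "degree (p + q) < ?m"
    using degree_add_le_max[of p q] by simp_all
  then show ?thesis
    by (simp only: poly_mat_eq_sum_lessThan coeff_add scaleR_add_left sum.distrib)
qed

lemma poly_mat_smult: "poly_mat (smult c p) M = c *\<^sub>R poly_mat p M"
proof -
  have "degree p < Suc (degree p)" "degree (smult c p) < Suc (degree p)"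
    using degree_smult_le[of c p] by simp_all
  then show ?thesis
    by (simp only: poly_mat_eq_sum_lessThan coeff_smult scaleR_scaleR scaleR_sum_right)
qed

lemma poly_mat_diff: "poly_mat (p - q) M = poly_mat p M - poly_mat q M"
  using poly_mat_add[of "p - q" q M] by (simp add: eq_diff_eq)

lemma poly_mat_sum: "finite S \<Longrightarrow> poly_mat (\<Sum>i\<in>S. f i) M = (\<Sum>i\<in>S. poly_mat (f i) M)"
  by (induction S rule: finite_induct) (simp_all add: poly_mat_add poly_mat_def[of 0])

lemma poly_mat_pCons: "poly_mat (pCons a q) M = a *\<^sub>R mat 1 + M ** poly_mat q M"
proof -
  let ?m = "Suc (degree q)"
  have "degree (pCons a q) < Suc ?m"
    using degree_pCons_le[of a q] by simp
  then have "poly_mat (pCons a q) M = (\<Sum>i<Suc ?m. coeff (pCons a q) i *\<^sub>R mat_pow M i)"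
    by (rule poly_mat_eq_sum_lessThan)
  also have "\<dots> = a *\<^sub>R mat 1 + (\<Sum>i<?m. coeff q i *\<^sub>R (M ** mat_pow M i))"
    by (subst sum.lessThan_Suc_shift) simp
  also have "\<dots> = a *\<^sub>R mat 1 + M ** poly_mat q M"
    by (simp add: poly_mat_eq_sum_lessThan[of q ?m] matrix_mul_sum_right matrix_scalar_ac
        scalar_matrix_assoc del: sum.lessThan_Suc)
  finally show ?thesis .
qed

lemma poly_mat_linear_mult:
  "poly_mat ([:w0, w1:] * q) N = (w0 *\<^sub>R mat 1 + w1 *\<^sub>R N) ** poly_mat q N"
proof -
  have "[:w0, w1:] * q = smult w0 q + pCons 0 (smult w1 q)"
    by (simp add: mult_pCons_left)
  then show ?thesis
    by (simp add: poly_mat_add poly_mat_smult poly_mat_pCons matrix_add_rdistrib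
        matrix_scalar_ac scalar_matrix_assoc[symmetric])
qed

lemma poly_mat_pcompose_cheb_U:
  "poly_mat (pcompose (cheb_U n) [:w0, w1:]) N = cheb_U_mat n (w0 *\<^sub>R mat 1 + w1 *\<^sub>R N)"
proof (induction n rule: cheb_U.induct)
  case 1
  have "pcompose 1 [:w0, w1:] = [:1:]"
    by (metis one_pCons pcompose_const)
  then show ?case by (simp add: poly_mat_def)
next
  case 2
  have "pcompose (cheb_U (Suc 0)) [:w0, w1:] = [:w0, w1:] * smult 2 1"
    by (simp add: pcompose_pCons)
  then show ?case
    by (simp add: poly_mat_linear_mult poly_mat_smult poly_mat_def matrix_scalar_ac scaleR_add_right)
next
  case (3 j)
  have "pcompose (cheb_U (Suc (Suc j))) [:w0, w1:] =
      [:w0, w1:] * smult 2 (pcompose (cheb_U (Suc j)) [:w0, w1:]) - pcompose (cheb_U j) [:w0, w1:]"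
    by (simp add: pcompose_diff pcompose_mult pcompose_pCons pcompose_smult algebra_simps)
  then show ?case
    using 3 by (simp only: poly_mat_diff poly_mat_linear_mult poly_mat_smult cheb_U_mat.simps
        matrix_scalar_ac scalar_matrix_assoc)
qed

lemma rkc_omega0_ge_1: "eps \<ge> 0 \<Longrightarrow> rkc_omega0 s eps \<ge> 1"
  by (simp add: rkc_omega0_def)

lemma rkc_b_nonzero:
  assumes "eps \<ge> 0"
  shows "rkc_b p s eps j \<noteq> 0"
proof -
  let ?w = "rkc_omega0 s eps"
  have w: "?w \<ge> 1" using rkc_omega0_ge_1[OF assms] .
  have "poly (pderiv (pderiv (cheb_T i))) ?w / (poly (pderiv (cheb_T i)) ?w)^2 \<noteq> 0" if "i \<ge> 2" for i
    using pderiv_cheb_T_ge_1[OF w, of i] pderiv2_cheb_T_ge_4[OF w that] that by simp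
  then show ?thesis
    using cheb_T_ge_1[OF w, of j] by (simp add: rkc_b_def Let_def)
qed

lemma rkc_d_Suc_Suc:
  fixes A :: "real^'n^'n"
  assumes "eps \<ge> 0"
  shows "rkc_d p s eps dt A r (k + 2) =
    (2 * rkc_b p s eps (k + 2) / rkc_b p s eps (k + 1)) *\<^sub>R
      ((rkc_omega0 s eps *\<^sub>R mat 1 + (rkc_omega1 p s eps * dt) *\<^sub>R A) *v rkc_d p s eps dt A r (k + 1))
    - (rkc_b p s eps (k + 2) / rkc_b p s eps k) *\<^sub>R rkc_d p s eps dt A r k + r (k + 2)"
  using rkc_b_nonzero[OF assms, of p s "k + 1"]
  by (simp add: rkc_nu_def rkc_kappa_def rkc_mu_def matrix_vector_mult_add_rdistrib
      scaleR_matrix_vector_assoc[symmetric] scaleR_add_right algebra_simps)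

lemma rkc_d_eq_cheb_U_mat_sum:
  fixes A :: "real^'n^'n"
  assumes "eps \<ge> 0"
  shows "rkc_d p s eps dt A r k =
    (\<Sum>j=1..k. (rkc_b p s eps k / rkc_b p s eps j) *\<^sub>R
      (cheb_U_mat (k - j) (rkc_omega0 s eps *\<^sub>R mat 1 + (rkc_omega1 p s eps * dt) *\<^sub>R A) *v r j))"
  by (rule chebyshev_iterates.weighted_recurrence_solution[OF chebyshev_iterates_cheb_U_mat
        rkc_b_nonzero[OF assms] _ _ rkc_d_Suc_Suc[OF assms]]) simp_all

lemma poly_rkc_R:
  "poly (rkc_R p s eps k) z = 1 + rkc_b p s eps k *
    (poly (cheb_T k) (rkc_omega0 s eps + rkc_omega1 p s eps * z) - poly (cheb_T k) (rkc_omega0 s eps))"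
  by (simp add: rkc_R_def rkc_a_def poly_pcompose algebra_simps)

lemma poly_rkc_R_Suc_Suc:
  assumes "eps \<ge> 0"
  shows "poly (rkc_R p s eps (k + 2)) z - 1 =
    (2 * rkc_b p s eps (k + 2) / rkc_b p s eps (k + 1)) *
      ((rkc_omega0 s eps + rkc_omega1 p s eps * z) * (poly (rkc_R p s eps (k + 1)) z - 1))
    - (rkc_b p s eps (k + 2) / rkc_b p s eps k) * (poly (rkc_R p s eps k) z - 1)
    + (rkc_mu p s eps (k + 2) + rkc_gamma p s eps (k + 2)) * z"
  using rkc_b_nonzero[OF assms, of p s k] rkc_b_nonzero[OF assms, of p s "k + 1"]
  by (simp add: poly_rkc_R rkc_mu_def rkc_gamma_def rkc_a_def field_simps)

lemma poly_rkc_R_minus_1_minus_c_Suc_Suc: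
  assumes "eps \<ge> 0"
  shows "poly (rkc_R p s eps (k + 2)) z - 1 - rkc_c p s eps (k + 2) * z =
    (2 * rkc_b p s eps (k + 2) / rkc_b p s eps (k + 1)) *
      ((rkc_omega0 s eps + rkc_omega1 p s eps * z) *
        (poly (rkc_R p s eps (k + 1)) z - 1 - rkc_c p s eps (k + 1) * z))
    - (rkc_b p s eps (k + 2) / rkc_b p s eps k) * (poly (rkc_R p s eps k) z - 1 - rkc_c p s eps k * z)
    + rkc_mu p s eps (k + 2) * rkc_c p s eps (k + 1) * z^2"
proof -
  have c_rec: "rkc_c p s eps (k + 2) =
      2 * rkc_omega0 s eps * rkc_b p s eps (k + 2) / rkc_b p s eps (k + 1) * rkc_c p s eps (k + 1)
      - rkc_b p s eps (k + 2) / rkc_b p s eps k * rkc_c p s eps k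
      + (rkc_mu p s eps (k + 2) + rkc_gamma p s eps (k + 2))"
    by (simp add: rkc_nu_def rkc_kappa_def)
  show ?thesis
    unfolding c_rec poly_rkc_R_Suc_Suc[OF assms]
    using rkc_b_nonzero[OF assms, of p s k] rkc_b_nonzero[OF assms, of p s "k + 1"]
    by (simp add: rkc_mu_def field_simps power2_eq_square)
qed

definition rkc_Rbar_cheb :: "nat \<Rightarrow> nat \<Rightarrow> real \<Rightarrow> nat \<Rightarrow> real poly" where
  "rkc_Rbar_cheb p s eps k =
    (\<Sum>j=1..k. smult (rkc_b p s eps k / rkc_b p s eps j * (rkc_mu p s eps j + rkc_gamma p s eps j))
      (pcompose (cheb_U (k - j)) [:rkc_omega0 s eps, rkc_omega1 p s eps:]))"

definition rkc_Rtilde_cheb :: "nat \<Rightarrow> nat \<Rightarrow> real \<Rightarrow> nat \<Rightarrow> real poly" where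
  "rkc_Rtilde_cheb p s eps k =
    (\<Sum>j=2..k. smult (rkc_b p s eps k / rkc_b p s eps j * (rkc_mu p s eps j * rkc_c p s eps (j - 1)))
      (pcompose (cheb_U (k - j)) [:rkc_omega0 s eps, rkc_omega1 p s eps:]))"

lemma poly_rkc_Rbar_cheb:
  "poly (rkc_Rbar_cheb p s eps k) z =
    (\<Sum>j=1..k. rkc_b p s eps k / rkc_b p s eps j
      * poly (cheb_U (k - j)) (rkc_omega0 s eps + rkc_omega1 p s eps * z)
      * (rkc_mu p s eps j + rkc_gamma p s eps j))"
  unfolding rkc_Rbar_cheb_def poly_sum by (rule sum.cong) (simp_all add: poly_pcompose algebra_simps)

lemma poly_rkc_Rtilde_cheb:
  "poly (rkc_Rtilde_cheb p s eps k) z =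
    (\<Sum>j=2..k. rkc_b p s eps k / rkc_b p s eps j
      * poly (cheb_U (k - j)) (rkc_omega0 s eps + rkc_omega1 p s eps * z)
      * (rkc_mu p s eps j * rkc_c p s eps (j - 1)))"
  unfolding rkc_Rtilde_cheb_def poly_sum by (rule sum.cong) (simp_all add: poly_pcompose algebra_simps)

lemma poly_rkc_R_minus_1:
  assumes "eps \<ge> 0"
  shows "poly (rkc_R p s eps k) z - 1 = z * poly (rkc_Rbar_cheb p s eps k) z"
proof -
  let ?x = "rkc_omega0 s eps + rkc_omega1 p s eps * z"
  have "poly (rkc_R p s eps k) z - 1 = (\<Sum>j=1..k. (rkc_b p s eps k / rkc_b p s eps j) *\<^sub>R
      (poly (cheb_U (k - j)) ?x * ((rkc_mu p s eps j + rkc_gamma p s eps j) * z)))"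
  proof (rule chebyshev_iterates.weighted_recurrence_solution[OF chebyshev_iterates_cheb_U
        rkc_b_nonzero[OF assms]])
    fix k
    show "poly (rkc_R p s eps (k + 2)) z - 1 =
      (2 * rkc_b p s eps (k + 2) / rkc_b p s eps (k + 1)) *\<^sub>R (?x * (poly (rkc_R p s eps (k + 1)) z - 1))
      - (rkc_b p s eps (k + 2) / rkc_b p s eps k) *\<^sub>R (poly (rkc_R p s eps k) z - 1)
      + (rkc_mu p s eps (k + 2) + rkc_gamma p s eps (k + 2)) * z"
      using poly_rkc_R_Suc_Suc[OF assms] by simp
  qed (simp_all add: poly_rkc_R rkc_mu_def rkc_gamma_def)
  then show ?thesis
    by (simp add: poly_rkc_Rbar_cheb sum_distrib_left mult_ac)
qed

lemma poly_rkc_R_minus_1_minus_c: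
  assumes "eps \<ge> 0"
  shows "poly (rkc_R p s eps k) z - 1 - rkc_c p s eps k * z = z^2 * poly (rkc_Rtilde_cheb p s eps k) z"
proof -
  let ?x = "rkc_omega0 s eps + rkc_omega1 p s eps * z"
  let ?term = "\<lambda>j. (rkc_b p s eps k / rkc_b p s eps j) *\<^sub>R
      (poly (cheb_U (k - j)) ?x * (rkc_mu p s eps j * rkc_c p s eps (j - 1) * z^2))"
  have "poly (rkc_R p s eps k) z - 1 - rkc_c p s eps k * z = (\<Sum>j=1..k. ?term j)"
  proof (rule chebyshev_iterates.weighted_recurrence_solution[OF chebyshev_iterates_cheb_U
        rkc_b_nonzero[OF assms]])
    fix k
    show "poly (rkc_R p s eps (k + 2)) z - 1 - rkc_c p s eps (k + 2) * z =
      (2 * rkc_b p s eps (k + 2) / rkc_b p s eps (k + 1)) *\<^sub>R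
        (?x * (poly (rkc_R p s eps (k + 1)) z - 1 - rkc_c p s eps (k + 1) * z))
      - (rkc_b p s eps (k + 2) / rkc_b p s eps k) *\<^sub>R (poly (rkc_R p s eps k) z - 1 - rkc_c p s eps k * z)
      + rkc_mu p s eps (k + 2) * rkc_c p s eps (k + 2 - 1) * z^2"
      using poly_rkc_R_minus_1_minus_c_Suc_Suc[OF assms] by simp
  qed (simp_all add: poly_rkc_R rkc_mu_def rkc_gamma_def)
  also have "\<dots> = (\<Sum>j=2..k. ?term j)"
    \<comment> \<open>the term j = 1 vanishes because c_0 = 0\<close>
    by (rule sum.mono_neutral_right) auto
  finally show ?thesis
    by (simp add: poly_rkc_Rtilde_cheb sum_distrib_left mult_ac)
qed

lemma rkc_Rbar_eq_cheb:
  assumes "eps \<ge> 0"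
  shows "rkc_Rbar p s eps k = rkc_Rbar_cheb p s eps k"
  unfolding rkc_Rbar_def by (rule poly_div_eqI) (simp_all add: poly_rkc_R_minus_1[OF assms])

lemma rkc_Rtilde_eq_cheb:
  assumes "eps \<ge> 0"
  shows "rkc_Rtilde p s eps k = rkc_Rtilde_cheb p s eps k"
  unfolding rkc_Rtilde_def
  by (rule poly_div_eqI)
    (use poly_rkc_R_minus_1_minus_c[OF assms] in \<open>simp_all add: power2_eq_square algebra_simps\<close>)

lemma poly_mat_rkc_Rbar:
  fixes A :: "real^'n^'n"
  assumes "eps \<ge> 0"
  shows "poly_mat (rkc_Rbar p s eps k) (dt *\<^sub>R A) =
    (\<Sum>j=1..k. (rkc_b p s eps k / rkc_b p s eps j * (rkc_mu p s eps j + rkc_gamma p s eps j)) *\<^sub>R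
      cheb_U_mat (k - j) (rkc_omega0 s eps *\<^sub>R mat 1 + (rkc_omega1 p s eps * dt) *\<^sub>R A))"
  by (simp add: rkc_Rbar_eq_cheb[OF assms] rkc_Rbar_cheb_def poly_mat_sum poly_mat_smult
      poly_mat_pcompose_cheb_U)

lemma rkc_d_eq_poly_mat_Rbar:
  fixes A :: "real^'n^'n"
  assumes "eps \<ge> 0"
    and r: "\<And>j. j \<in> {1..k} \<Longrightarrow> r j = (rkc_mu p s eps j + rkc_gamma p s eps j) *\<^sub>R rr"
  shows "rkc_d p s eps dt A r k = poly_mat (rkc_Rbar p s eps k) (dt *\<^sub>R A) *v rr"
  unfolding rkc_d_eq_cheb_U_mat_sum[OF assms(1)] poly_mat_rkc_Rbar[OF assms(1)]
    sum_matrix_vector_mult[OF finite_atLeastAtMost]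
  by (rule sum.cong) (simp_all add: r matrix_vector_mult_scaleR scaleR_matrix_vector_assoc[symmetric])

theorem lemma3p1:
  fixes p s :: nat and eps dt :: real and A :: "real^'n^'n" and r :: "nat \<Rightarrow> real^'n"
  assumes "p \<in> {1, 2}" and "s \<ge> 1" and "p = 2 \<Longrightarrow> s \<ge> 2"
    and "eps \<ge> 0" and "dt > 0"
  shows
    "(\<forall>k\<in>{1..s}. rkc_d p s eps dt A r k =
        (\<Sum>j=1..k. (rkc_b p s eps k / rkc_b p s eps j) *\<^sub>R
           (cheb_U_mat (k - j) (rkc_omega0 s eps *\<^sub>R mat 1 + (rkc_omega1 p s eps * dt) *\<^sub>R A) *v r j)))
   \<and> (\<forall>k\<in>{1..s}. \<forall>z::real.
        poly (rkc_Rbar p s eps k) z =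
          (\<Sum>j=1..k. rkc_b p s eps k / rkc_b p s eps j
             * poly (cheb_U (k - j)) (rkc_omega0 s eps + rkc_omega1 p s eps * z)
             * (rkc_mu p s eps j + rkc_gamma p s eps j))
        \<and> (z \<noteq> 0 \<longrightarrow> (poly (rkc_R p s eps k) z - 1) / z = poly (rkc_Rbar p s eps k) z)
        \<and> poly (rkc_Rtilde p s eps k) z =
          (\<Sum>j=2..k. rkc_b p s eps k / rkc_b p s eps j
             * poly (cheb_U (k - j)) (rkc_omega0 s eps + rkc_omega1 p s eps * z)
             * (rkc_mu p s eps j * rkc_c p s eps (j - 1)))
        \<and> (z \<noteq> 0 \<longrightarrow> (poly (rkc_R p s eps k) z - 1 - rkc_c p s eps k * z) / z^2
                       = poly (rkc_Rtilde p s eps k) z))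
   \<and> (\<forall>rr :: real^'n. (\<forall>j\<in>{1..s}. r j = (rkc_mu p s eps j + rkc_gamma p s eps j) *\<^sub>R rr) \<longrightarrow>
        (\<forall>k\<in>{1..s}. rkc_d p s eps dt A r k = poly_mat (rkc_Rbar p s eps k) (dt *\<^sub>R A) *v rr))"
proof -
  (* The identities hold for all k. *)
  note eps = \<open>eps \<ge> 0\<close>
  have Rbar_quotient: "(poly (rkc_R p s eps k) z - 1) / z = poly (rkc_Rbar p s eps k) z"
    if "z \<noteq> 0" for k z
    using that by (simp add: poly_rkc_R_minus_1[OF eps] rkc_Rbar_eq_cheb[OF eps])
  have Rtilde_quotient:
    "(poly (rkc_R p s eps k) z - 1 - rkc_c p s eps k * z) / z^2 = poly (rkc_Rtilde p s eps k) z"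
    if "z \<noteq> 0" for k z
    using that by (simp add: poly_rkc_R_minus_1_minus_c[OF eps] rkc_Rtilde_eq_cheb[OF eps])
  have d_poly_mat: "rkc_d p s eps dt A r k = poly_mat (rkc_Rbar p s eps k) (dt *\<^sub>R A) *v rr"
    if "\<forall>j\<in>{1..s}. r j = (rkc_mu p s eps j + rkc_gamma p s eps j) *\<^sub>R rr" and "k \<in> {1..s}" for rr k
    using that by (intro rkc_d_eq_poly_mat_Rbar[OF eps]) auto
  show ?thesis
    using Rbar_quotient Rtilde_quotient d_poly_mat
    by (simp add: rkc_d_eq_cheb_U_mat_sum[OF eps] rkc_Rbar_eq_cheb[OF eps] rkc_Rtilde_eq_cheb[OF eps]
        poly_rkc_Rbar_cheb poly_rkc_Rtilde_cheb)
qed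

end
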